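(* Let $ubav$ be a word with $|ub| = i$ and attributes $(x_i,y_i)=(x_{i+1},y_{i+1})$ satisfying $x_i + y_i = k+1$. Then $ubav \sim_k uabv$.
   Context: $A$ is a finite alphabet, $a,b\in A$, and $k\in\mathbb{N}$. Simon's congruence $u\sim_k v$ holds iff $u$ and $v$ have the same (scattered) subwords of length at most $k$. An $\mathsf{X}$-ranker is a nonempty word over $\{\mathsf{X}_a : a\in A\}$ ("go to the next $a$-position", starting with the first $a$-position) and a $\mathsf{Y}$-ranker a nonempty word over $\{\mathsf{Y}_a : a\in A\}$ ("go to the previous $a$-position", starting with the last $a$-position). The attribute of position $i$ is $(x_i,y_i)$, where $x_i$ (resp. $y_i$) is the length of a shortest $\mathsf{X}$-ranker (resp. $\mathsf{Y}$-ranker) reaching $i$. *)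

theory Defs
  imports Main "HOL-Library.Sublist"
begin

text \<open>Words are lists; positions are 1-indexed: position p of w (1 \<le> p \<le> length w)
  carries the letter w ! (p - 1).  A ranker is represented by the nonempty list of
  letters c of its operators X_c (resp. Y_c).\<close>

definition simon_cong :: "nat \<Rightarrow> 'a list \<Rightarrow> 'a list \<Rightarrow> bool" where
  "simon_cong k u v \<longleftrightarrow> (\<forall>w. length w \<le> k \<longrightarrow> (subseq w u \<longleftrightarrow> subseq w v))"

fun xrank_from :: "'a list \<Rightarrow> nat \<Rightarrow> 'a list \<Rightarrow> nat option" where
  "xrank_from w j [] = Some j"
| "xrank_from w j (c # r) =
     (if \<exists>p. j < p \<and> p \<le> length w \<and> w ! (p - 1) = c
      then xrank_from w (LEAST p. j < p \<and> p \<le> length w \<and> w ! (p - 1) = c) r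
      else None)"

fun yrank_from :: "'a list \<Rightarrow> nat \<Rightarrow> 'a list \<Rightarrow> nat option" where
  "yrank_from w j [] = Some j"
| "yrank_from w j (c # r) =
     (if \<exists>p. 1 \<le> p \<and> p < j \<and> w ! (p - 1) = c
      then yrank_from w (GREATEST p. 1 \<le> p \<and> p < j \<and> w ! (p - 1) = c) r
      else None)"

definition xeval :: "'a list \<Rightarrow> 'a list \<Rightarrow> nat option" where
  "xeval w r = xrank_from w 0 r"

definition yeval :: "'a list \<Rightarrow> 'a list \<Rightarrow> nat option" where
  "yeval w r = yrank_from w (Suc (length w)) r"

definition xattr :: "'a list \<Rightarrow> nat \<Rightarrow> nat" where
  "xattr w i = (LEAST n. \<exists>r. r \<noteq> [] \<and> length r = n \<and> xeval w r = Some i)"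

definition yattr :: "'a list \<Rightarrow> nat \<Rightarrow> nat" where
  "yattr w i = (LEAST n. \<exists>r. r \<noteq> [] \<and> length r = n \<and> yeval w r = Some i)"

end

theory Submission
  imports Defs
begin

text \<open>Let \<open>w = u b a v\<close>, where \<open>b\<close> and \<open>a\<close> sit at positions \<open>i\<close> and \<open>i + 1\<close>. A subword
  \<open>s\<close> of \<open>w\<close> that is not a subword of \<open>u a b v\<close> must use both letters, as \<open>s = s\<^sub>1 b a s\<^sub>3\<close>
  with \<open>s\<^sub>1 b\<close> not a subword of \<open>u\<close> and \<open>a s\<^sub>3\<close> not a subword of \<open>v\<close>. Then the X-ranker
  \<open>s\<^sub>1 b\<close> follows the leftmost embedding of \<open>s\<^sub>1 b\<close> into \<open>u b\<close> and lands on position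
  \<open>i\<close>, and dually the Y-ranker read off \<open>a s\<^sub>3\<close> from the right lands on \<open>i + 1\<close>. Hence
  \<open>x\<^sub>i + y\<^bsub>i+1\<^esub> \<le> |s|\<close>, and symmetrically \<open>x\<^bsub>i+1\<^esub> + y\<^sub>i \<le> |s|\<close> for separating
  subwords in the other direction; both sums equal \<open>k + 1\<close>, so no separating subword has
  length at most \<open>k\<close>.\<close>

lemma subseq_Cons_split_first:
  assumes "subseq (c # r) M"
  obtains P Q where "M = P @ c # Q" "c \<notin> set P" "subseq r Q"
proof -
  from assms obtain us vs where M: "M = us @ vs" "subseq [c] us" "subseq r vs"
    using list_emb_appendD[of "(=)" "[c]" r M] by auto
  then obtain P Q where "us = P @ c # Q" "c \<notin> set P"
    by (auto simp: subseq_singleton_left dest: split_list_first)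
  with M show thesis by (intro that[of P "Q @ vs"]) (auto intro: subseq_drop_many)
qed

lemma subseq_snoc_split_last:
  assumes "subseq (r @ [c]) M"
  obtains P Q where "M = P @ c # Q" "c \<notin> set Q" "subseq r P"
proof -
  from assms obtain us vs where M: "M = us @ vs" "subseq r us" "subseq [c] vs"
    using list_emb_appendD by blast
  then obtain P Q where "vs = P @ c # Q" "c \<notin> set Q"
    by (auto simp: subseq_singleton_left dest: split_list_last)
  with M show thesis by (intro that[of "us @ P" Q]) (auto intro: subseq_rev_drop_many)
qed

lemma subseq_singleton_right_iff: "subseq xs [y] \<longleftrightarrow> xs = [] \<or> xs = [y]"
  by (cases xs) auto

lemma subseq_snoc_neq_iff:
  assumes "x \<noteq> y"
  shows "subseq (xs @ [x]) (ys @ [y]) \<longleftrightarrow> subseq (xs @ [x]) ys"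
proof
  assume "subseq (xs @ [x]) (ys @ [y])"
  then obtain xs1 xs2 where "xs @ [x] = xs1 @ xs2" "subseq xs1 ys" "subseq xs2 [y]"
    by (rule subseq_appendE)
  with assms show "subseq (xs @ [x]) ys"
    by (auto simp: subseq_singleton_right_iff)
qed (rule subseq_rev_drop_many)

lemma subseq_pair_cases: "subseq t [c, d] \<Longrightarrow> t = [c, d] \<or> subseq t [d, c]"
  by (cases t) (auto simp: subseq_singleton_right_iff split: if_splits)

lemma xrank_from_first_occurrence:
  assumes "c \<notin> set P"
  shows "xrank_from (L @ P @ c # R) (length L) (c # r) =
    xrank_from (L @ P @ c # R) (length L + length P + 1) r"
proof -
  let ?w = "L @ P @ c # R"
  have "length L + length P + 1 \<le> p" if "length L < p" "?w ! (p - 1) = c" for p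
  proof (rule ccontr)
    assume "\<not> length L + length P + 1 \<le> p"
    moreover define m where "m = p - length L - 1"
    ultimately have "p - 1 = length L + m" "m < length P"
      using that(1) by auto
    then have "?w ! (p - 1) = P ! m" by (simp add: nth_append)
    with \<open>m < length P\<close> that(2) assms show False by auto
  qed
  then have "(LEAST p. length L < p \<and> p \<le> length ?w \<and> ?w ! (p - 1) = c) = length L + length P + 1"
    by (intro Least_equality) (auto simp: nth_append)
  moreover have "\<exists>p. length L < p \<and> p \<le> length ?w \<and> ?w ! (p - 1) = c"
    by (auto simp: nth_append intro!: exI[of _ "length L + length P + 1"])
  ultimately show ?thesis by simp
qed

lemma yrank_from_last_occurrence:
  assumes "c \<notin> set Q"
  shows "yrank_from (L @ c # Q @ R) (length L + length Q + 2) (c # r) =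
    yrank_from (L @ c # Q @ R) (length L + 1) r"
proof -
  let ?w = "L @ c # Q @ R"
  have "p \<le> length L + 1" if "p < length L + length Q + 2" "?w ! (p - 1) = c" for p
  proof (rule ccontr)
    assume "\<not> p \<le> length L + 1"
    moreover define m where "m = p - length L - 2"
    ultimately have "p - 1 = length L + 1 + m" "m < length Q"
      using that(1) by auto
    then have "?w ! (p - 1) = Q ! m" by (simp add: nth_append)
    with \<open>m < length Q\<close> that(2) assms show False by auto
  qed
  then have "(GREATEST p. 1 \<le> p \<and> p < length L + length Q + 2 \<and> ?w ! (p - 1) = c) = length L + 1"
    by (intro Greatest_equality) (auto simp: nth_append)
  moreover have "\<exists>p. 1 \<le> p \<and> p < length L + length Q + 2 \<and> ?w ! (p - 1) = c"
    by (auto simp: nth_append intro!: exI[of _ "length L + 1"])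
  ultimately show ?thesis by simp
qed

lemma xrank_from_leftmost_embedding:
  assumes "subseq r M" "\<not> subseq (r @ [c]) M"
  shows "xrank_from (L @ M @ c # N) (length L) (r @ [c]) = Some (length L + length M + 1)"
  using assms
proof (induction r arbitrary: L M)
  case Nil
  then have "c \<notin> set M" by (simp add: subseq_singleton_left)
  then show ?case using xrank_from_first_occurrence[of c M L N "[]"] by simp
next
  case (Cons c' r)
  obtain P Q where M: "M = P @ c' # Q" "c' \<notin> set P" "subseq r Q"
    using Cons.prems(1) by (rule subseq_Cons_split_first)
  have "\<not> subseq (r @ [c]) Q"
    using Cons.prems(2) M(1) by (auto intro: subseq_drop_many)
  then have "xrank_from ((L @ P @ [c']) @ Q @ c # N) (length (L @ P @ [c'])) (r @ [c]) =
      Some (length (L @ P @ [c']) + length Q + 1)"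
    using Cons.IH M(3) by blast
  with M show ?case
    using xrank_from_first_occurrence[of c' P L "Q @ c # N" "r @ [c]"] by simp
qed

text \<open>A Y-ranker lists its letters in the order they are applied, so \<open>rev r @ [c]\<close> reads the
  subword \<open>c # r\<close> from the right.\<close>

lemma yrank_from_rightmost_embedding:
  assumes "subseq r M" "\<not> subseq (c # r) M"
  shows "yrank_from (L @ c # M @ N) (length L + length M + 2) (rev r @ [c]) = Some (length L + 1)"
  using assms
proof (induction r arbitrary: M N rule: rev_induct)
  case Nil
  then have "c \<notin> set M" by (simp add: subseq_singleton_left)
  then show ?case using yrank_from_last_occurrence[of c M L N "[]"] by simp
next
  case (snoc c' r)
  obtain P Q where M: "M = P @ c' # Q" "c' \<notin> set Q" "subseq r P"
    using snoc.prems(1) by (rule subseq_snoc_split_last)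
  have "\<not> subseq (c # r) P"
    using snoc.prems(2) M(1) list_emb_append_mono[of "(=)" "c # r" P "[c']" "c' # Q"] by auto
  then have "yrank_from (L @ c # P @ c' # Q @ N) (length L + length P + 2) (rev r @ [c]) =
      Some (length L + 1)"
    using snoc.IH M(3) by blast
  with M show ?case
    using yrank_from_last_occurrence[of c' Q "L @ c # P" N "rev r @ [c]"]
    by (simp add: add.assoc del: yrank_from.simps)
qed

lemma subseq_adjacent_swapE:
  assumes "subseq s (u @ c # d # v)" "\<not> subseq s (u @ d # c # v)"
  obtains s1 s3 where "s = s1 @ c # d # s3" "subseq s1 u" "subseq s3 v"
    "\<not> subseq (s1 @ [c]) u" "\<not> subseq (d # s3) v"
proof -
  have "subseq s (u @ [c, d] @ v)"
    using assms(1) by simp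
  then obtain s1 t' where s1: "s = s1 @ t'" "subseq s1 u" "subseq t' ([c, d] @ v)"
    by (rule subseq_appendE)
  obtain t s3 where t': "t' = t @ s3" "subseq t [c, d]" "subseq s3 v"
    using s1(3) by (rule subseq_appendE)
  have s: "s = s1 @ t @ s3" "subseq s1 u" "subseq t [c, d]" "subseq s3 v"
    using s1 t' by simp_all
  have t: "t = [c, d]"
  proof (rule ccontr)
    assume "t \<noteq> [c, d]"
    then have "subseq t [d, c]"
      using subseq_pair_cases[OF s(3)] by blast
    then have "subseq (s1 @ t @ s3) (u @ [d, c] @ v)"
      using s(2,4) by (intro list_emb_append_mono)
    then show False
      using assms(2) s(1) by simp
  qed
  have "\<not> subseq (s1 @ [c]) u"
  proof
    assume "subseq (s1 @ [c]) u"
    then have "subseq ((s1 @ [c]) @ [d] @ s3) (u @ [d] @ c # v)"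
      using s(4) by (intro list_emb_append_mono) auto
    then show False
      using assms(2) s(1) t by simp
  qed
  moreover have "\<not> subseq (d # s3) v"
  proof
    assume "subseq (d # s3) v"
    then have "subseq (s1 @ [c] @ d # s3) (u @ [d, c] @ v)"
      using s(2) by (intro list_emb_append_mono) auto
    then show False
      using assms(2) s(1) t by simp
  qed
  ultimately show thesis
    using that s t by simp
qed

lemma xattr_le_length: "r \<noteq> [] \<Longrightarrow> xeval w r = Some p \<Longrightarrow> xattr w p \<le> length r"
  unfolding xattr_def by (rule Least_le) blast

lemma yattr_le_length: "r \<noteq> [] \<Longrightarrow> yeval w r = Some p \<Longrightarrow> yattr w p \<le> length r"
  unfolding yattr_def by (rule Least_le) blast

lemma attrs_le_length_of_swap_witness:
  assumes "subseq s (u @ c # d # v)" "\<not> subseq s (u @ d # c # v)"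
  shows "xattr (u @ c # d # v) (length u + 1) + yattr (u @ c # d # v) (length u + 2) \<le> length s"
proof -
  let ?w = "u @ c # d # v"
  obtain s1 s3 where s: "s = s1 @ c # d # s3" "subseq s1 u" "subseq s3 v"
      "\<not> subseq (s1 @ [c]) u" "\<not> subseq (d # s3) v"
    using assms by (rule subseq_adjacent_swapE)
  have "xeval ?w (s1 @ [c]) = Some (length u + 1)"
    using xrank_from_leftmost_embedding[of s1 u c "[]" "d # v"] s by (simp add: xeval_def)
  then have "xattr ?w (length u + 1) \<le> length s1 + 1"
    using xattr_le_length[of "s1 @ [c]"] by simp
  moreover have "yeval ?w (rev s3 @ [d]) = Some (length u + 2)"
    using yrank_from_rightmost_embedding[of s3 v d "u @ [c]" "[]"] s by (simp add: yeval_def)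
  then have "yattr ?w (length u + 2) \<le> length s3 + 1"
    using yattr_le_length[of "rev s3 @ [d]"] by simp
  ultimately show ?thesis
    using s(1) by simp
qed

lemma attrs_le_length_of_swap_witness_in_swapped_word:
  assumes "subseq s (u @ c # d # v)" "\<not> subseq s (u @ d # c # v)"
  shows "xattr (u @ d # c # v) (length u + 2) + yattr (u @ d # c # v) (length u + 1) \<le> length s"
proof -
  let ?w = "u @ d # c # v"
  obtain s1 s3 where s: "s = s1 @ c # d # s3" "subseq s1 u" "subseq s3 v"
      "\<not> subseq (s1 @ [c]) u" "\<not> subseq (d # s3) v"
    using assms by (rule subseq_adjacent_swapE)
  have "c \<noteq> d"
    using assms by auto
  have "xeval ?w (s1 @ [c]) = Some (length u + 2)"
    using xrank_from_leftmost_embedding[of s1 "u @ [d]" c "[]" v] s \<open>c \<noteq> d\<close>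
    by (simp add: xeval_def subseq_snoc_neq_iff subseq_rev_drop_many)
  then have "xattr ?w (length u + 2) \<le> length s1 + 1"
    using xattr_le_length[of "s1 @ [c]"] by simp
  moreover have "yeval ?w (rev s3 @ [d]) = Some (length u + 1)"
    using yrank_from_rightmost_embedding[of s3 "c # v" d u "[]"] s list_emb_Cons[OF s(3)]
      \<open>c \<noteq> d\<close> by (simp add: yeval_def)
  then have "yattr ?w (length u + 1) \<le> length s3 + 1"
    using yattr_le_length[of "rev s3 @ [d]"] by simp
  ultimately show ?thesis
    using s(1) by simp
qed

theorem proposition11:
  fixes u v :: "'a list" and a b :: 'a and i k :: nat
  assumes "length (u @ [b]) = i"
    and "xattr (u @ b # a # v) i = xattr (u @ b # a # v) (i + 1)"
    and "yattr (u @ b # a # v) i = yattr (u @ b # a # v) (i + 1)"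
    and "xattr (u @ b # a # v) i + yattr (u @ b # a # v) i = k + 1"
  shows "simon_cong k (u @ b # a # v) (u @ a # b # v)"
  unfolding simon_cong_def
proof (intro allI impI)
  fix s :: "'a list"
  assume "length s \<le> k"
  have i: "i = length u + 1" "i + 1 = length u + 2"
    using assms(1) by simp_all
  have "\<not> (subseq s (u @ b # a # v) \<and> \<not> subseq s (u @ a # b # v))"
    using attrs_le_length_of_swap_witness[of s u b a v] assms(3,4) i \<open>length s \<le> k\<close> by auto
  moreover have "\<not> (subseq s (u @ a # b # v) \<and> \<not> subseq s (u @ b # a # v))"
    using attrs_le_length_of_swap_witness_in_swapped_word[of s u a b v] assms(2,4) i \<open>length s \<le> k\<close>
    by auto
  ultimately show "subseq s (u @ b # a # v) \<longleftrightarrow> subseq s (u @ a # b # v)"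
    by blast
qed

end
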